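(* Let $-3<\gamma\le1$, $0<\varepsilon\le1$, $\vartheta>0$ sufficiently small and $0<\sigma\le\frac14$, and $\widetilde\vartheta(t)=\vartheta(1+(1+t)^{-\sigma})$. Let $\phi^\varepsilon(t,x)$ satisfy $\sup_{0\le t\le T}\{(1+t)^{5/4}\|\nabla_x\phi^\varepsilon(t)\|_{W^{1,\infty}_x}\}\le\delta$ for a sufficiently small $\delta>0$. Define $\widetilde\nu$ by $$\frac1{\varepsilon^2}\widetilde\nu(t,x,v)=\frac1{\varepsilon^2}\nu(v)+\frac v2\cdot\nabla_x\phi^\varepsilon(t,x)+2\widetilde\vartheta(t)\,v\cdot\nabla_x\phi^\varepsilon(t,x)+\frac{\vartheta\sigma}{(1+t)^{1+\sigma}}|v|^2 .$$ Then, for $0\le t\le T$, $$\frac1{\varepsilon^2}\widetilde\nu\gtrsim\frac1{2\varepsilon^2}\nu(v)+\frac{\langle v\rangle^2}{(1+t)^{1+\sigma}}.$$ In particular, if $-3<\gamma<0$ and $0<\sigma\le\frac1{24}$, then also $$\frac1{\varepsilon^2}\widetilde\nu\gtrsim\varepsilon^{-4/5}(1+t)^{\varrho-1},\qquad\varrho:=\frac{\sigma\gamma+2}{2-\gamma}\in\Big(\frac38,1\Big).$$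
   Context: $\mu(v)=(2\pi)^{-3/2}e^{-|v|^2/2}$, $\langle v\rangle=(1+|v|^2)^{1/2}$, $\nu(v)=\iint_{\mathbb{R}^3\times\mathbb{S}^2}|v-v_*|^\gamma q_0(\theta)\mu(v_* )\mathrm{d}\omega\mathrm{d}v_*$ with $0\le q_0(\theta)\le C|\cos\theta|$ (so $\nu(v)\sim\langle v\rangle^\gamma$). Implicit constants are independent of $\varepsilon$, $t$, $x$, $v$. *)

theory Defs
  imports "HOL-Analysis.Analysis"
begin

type_synonym vec3 = "real ^ 3"

definition mu :: "vec3 \<Rightarrow> real" where
  "mu v = (2 * pi) powr (-3/2) * exp (- ((norm v)\<^sup>2) / 2)"

definition jbr :: "vec3 \<Rightarrow> real" where
  "jbr v = sqrt (1 + (norm v)\<^sup>2)"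

text \<open>Integral over the unit sphere S^2 with its surface measure, written via the
  identity  int_{S^2} f d omega = 3 * int_{|y|<1} f(y/|y|) dy.\<close>
definition sphere_integral :: "(vec3 \<Rightarrow> real) \<Rightarrow> real" where
  "sphere_integral f = 3 * (\<integral> y. indicator (ball 0 1) y * f (y /\<^sub>R norm y) \<partial>lborel)"

definition coll_freq :: "real \<Rightarrow> (real \<Rightarrow> real) \<Rightarrow> vec3 \<Rightarrow> real" where
  "coll_freq \<gamma> q0 v =
     (\<integral> vs. sphere_integral
        (\<lambda>\<omega>. norm (v - vs) powr \<gamma> * q0 (arccos (((v - vs) \<bullet> \<omega>) / norm (v - vs))) * mu vs)
      \<partial>lborel)"

definition vartheta_tilde :: "real \<Rightarrow> real \<Rightarrow> real \<Rightarrow> real" where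
  "vartheta_tilde \<theta> \<sigma> t = \<theta> * (1 + (1 + t) powr (- \<sigma>))"

definition nu_tilde ::
  "real \<Rightarrow> (real \<Rightarrow> real) \<Rightarrow> real \<Rightarrow> real \<Rightarrow> real \<Rightarrow> vec3 \<Rightarrow> real \<Rightarrow> vec3 \<Rightarrow> real" where
  "nu_tilde \<gamma> q0 \<theta> \<sigma> \<epsilon> gphi t v =
     \<epsilon>^2 * (coll_freq \<gamma> q0 v / \<epsilon>^2 + ((1/2) *\<^sub>R v) \<bullet> gphi
             + 2 * vartheta_tilde \<theta> \<sigma> t * (v \<bullet> gphi)
             + \<theta> * \<sigma> / (1 + t) powr (1 + \<sigma>) * (norm v)\<^sup>2)"

text \<open>||g||_{W^{1,infty}} <= b for a vector field g on R^3: sup|g| + Lip(g) <= b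
  (the Lipschitz constant equals the L^infty norm of the derivative, operator norm).\<close>
definition W1inf_le :: "(vec3 \<Rightarrow> vec3) \<Rightarrow> real \<Rightarrow> bool" where
  "W1inf_le g b \<longleftrightarrow> (\<exists>A B. (\<forall>x. norm (g x) \<le> A) \<and>
      (\<forall>x y. norm (g x - g y) \<le> B * norm (x - y)) \<and> A + B \<le> b)"

end

theory Submission
  imports Defs
begin

(* After division by eps^2, nu-tilde is nu/eps^2 + K (v . grad phi) + theta sigma |v|^2 (1+t)^(-1-sigma)
   with 0 <= K <= 9/2, and |grad phi| <= delta (1+t)^(-5/4) <= delta (1+t)^(-1-sigma) since sigma <= 1/4.
   The cross term is thus at most (9/2) delta |v| (1+t)^(-1-sigma): for |v| >= 1 it is absorbed by half
   of the |v|^2 term, for |v| <= 1 by half of nu/eps^2, which is bounded below there because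
   nu >= c1 <v>^gamma with gamma > -3.  For the second bound, A X^gamma + B X^2 with A = eps^(-2),
   B = (1+t)^(-1-sigma) is at least its value A^(2/(2-gamma)) B^(-gamma/(2-gamma)) at the point X0 where
   both terms are equal, and eps^(-4/(2-gamma)) >= eps^(-4/5). *)

lemma W1inf_le_imp_norm_le:
  assumes "W1inf_le g b"
  shows "norm (g x) \<le> b"
proof -
  obtain A B where bounded: "\<forall>x. norm (g x) \<le> A"
    and lipschitz: "\<forall>x y. norm (g x - g y) \<le> B * norm (x - y)" and "A + B \<le> b"
    using assms unfolding W1inf_le_def by blast
  have "0 \<le> B"
    using lipschitz[rule_format, of "axis 1 1" 0]
    by simp (meson norm_ge_zero order_trans)
  with bounded[rule_format, of x] \<open>A + B \<le> b\<close> show ?thesis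
    by linarith
qed

lemma absorb_linear_term:
  fixes a a0 b n s L \<kappa> :: real
  assumes "0 \<le> a" "0 \<le> n" "0 < s" "s \<le> 1" "0 < a0" "0 < b" "0 \<le> \<kappa>"
    and L: "\<bar>L\<bar> \<le> \<kappa> * n * s" and \<kappa>: "\<kappa> \<le> a0/2" "\<kappa> \<le> b/2"
    and a_ge: "n \<le> 1 \<Longrightarrow> a0 \<le> a"
  shows "min (a0/(a0+4)) (b/4) * (a/2 + (1+n\<^sup>2) * s) \<le> a + L + b * n\<^sup>2 * s"
proof (cases "n \<le> 1")
  case True
  have "n * s \<le> 1"
    using assms True by (intro mult_le_one) auto
  then have "\<kappa> * n * s \<le> a0/2"
    using mult_left_mono[of "n * s" 1 \<kappa>] \<kappa> \<open>0 \<le> \<kappa>\<close> by (simp add: mult.assoc)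
  have "n\<^sup>2 \<le> 1"
    using assms True by (simp add: power_le_one)
  then have "(1+n\<^sup>2) * s \<le> 2 * 1"
    using assms by (intro mult_mono) auto
  also have "\<dots> \<le> 2 * a/a0"
    using assms a_ge[OF True] by (simp add: field_simps)
  finally have "min (a0/(a0+4)) (b/4) * (a/2 + (1+n\<^sup>2) * s) \<le> a0/(a0+4) * (a/2 + 2 * a/a0)"
    using assms by (intro mult_mono min.cobounded1) auto
  also have "\<dots> = a0/(a0+4) * ((a0+4)/a0 * (a/2))"
    using \<open>0 < a0\<close> by (simp add: field_simps)
  also have "\<dots> = a/2"
    using \<open>0 < a0\<close> by simp
  finally have "min (a0/(a0+4)) (b/4) * (a/2 + (1+n\<^sup>2) * s) \<le> a/2" .
  moreover have "0 \<le> b * n\<^sup>2 * s"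
    using assms by simp
  ultimately show ?thesis
    using L abs_ge_minus_self[of L] \<open>\<kappa> * n * s \<le> a0/2\<close> a_ge[OF True] by linarith
next
  case False
  then have "n \<le> n\<^sup>2"
    by (simp add: power2_eq_square)
  then have "\<kappa> * n * s \<le> (b/2) * n\<^sup>2 * s"
    using assms by (intro mult_right_mono mult_mono) auto
  have "min (a0/(a0+4)) (b/4) \<le> 1"
    using \<open>0 < a0\<close> by (intro min.coboundedI1) simp
  moreover have "1 + n\<^sup>2 \<le> 2 * n\<^sup>2"
    using False by (simp add: one_le_power)
  ultimately have "min (a0/(a0+4)) (b/4) * (a/2 + (1+n\<^sup>2) * s) \<le> 1 * (a/2) + b/4 * (2 * n\<^sup>2 * s)"
    unfolding distrib_left using assms
    by (intro add_mono mult_mono) (auto simp: field_simps)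
  then show ?thesis
    using L abs_ge_minus_self[of L] \<open>\<kappa> * n * s \<le> (b/2) * n\<^sup>2 * s\<close> \<open>0 \<le> a\<close> by linarith
qed

lemma powr_balance_le:
  fixes A B X \<alpha> \<beta> :: real
  assumes "0 < A" "0 < B" "0 < X" "\<alpha> \<le> 0" "0 \<le> \<beta>" "\<alpha> < \<beta>"
  shows "A powr (\<beta>/(\<beta>-\<alpha>)) * B powr (-\<alpha>/(\<beta>-\<alpha>)) \<le> A * X powr \<alpha> + B * X powr \<beta>"
proof -
  define X0 where "X0 = (A/B) powr (1/(\<beta>-\<alpha>))"
  define V where "V = A powr (\<beta>/(\<beta>-\<alpha>)) * B powr (-\<alpha>/(\<beta>-\<alpha>))"
  have "0 < X0"
    using assms by (simp add: X0_def)
  have "A * X0 powr \<alpha> = A powr 1 * (A powr (\<alpha>/(\<beta>-\<alpha>)) / B powr (\<alpha>/(\<beta>-\<alpha>)))"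
    using assms by (simp add: X0_def powr_powr powr_divide)
  also have "\<dots> = A powr (1 + \<alpha>/(\<beta>-\<alpha>)) * B powr (-\<alpha>/(\<beta>-\<alpha>))"
    using assms by (simp add: powr_add powr_minus divide_inverse)
  also have "1 + \<alpha>/(\<beta>-\<alpha>) = \<beta>/(\<beta>-\<alpha>)"
    using assms by (simp add: field_simps)
  finally have left: "A * X0 powr \<alpha> = V"
    by (simp add: V_def)
  have "B * X0 powr \<beta> = B powr 1 * (A powr (\<beta>/(\<beta>-\<alpha>)) / B powr (\<beta>/(\<beta>-\<alpha>)))"
    using assms by (simp add: X0_def powr_powr powr_divide)
  also have "\<dots> = A powr (\<beta>/(\<beta>-\<alpha>)) * B powr (1 - \<beta>/(\<beta>-\<alpha>))"
    using assms by (simp add: powr_diff)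
  also have "1 - \<beta>/(\<beta>-\<alpha>) = -\<alpha>/(\<beta>-\<alpha>)"
    using assms by (simp add: field_simps)
  finally have right: "B * X0 powr \<beta> = V"
    by (simp add: V_def)
  show ?thesis
    unfolding V_def[symmetric]
  proof (cases "X \<le> X0")
    case True
    then have "A * X0 powr \<alpha> \<le> A * X powr \<alpha>"
      using assms \<open>0 < X0\<close> by (simp add: powr_mono2')
    moreover have "0 \<le> B * X powr \<beta>"
      using assms by simp
    ultimately show "V \<le> A * X powr \<alpha> + B * X powr \<beta>"
      using left by linarith
  next
    case False
    then have "B * X0 powr \<beta> \<le> B * X powr \<beta>"
      using assms \<open>0 < X0\<close> by (simp add: powr_mono2)
    moreover have "0 \<le> A * X powr \<alpha>"
      using assms by simp
    ultimately show "V \<le> A * X powr \<alpha> + B * X powr \<beta>"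
      using right by linarith
  qed
qed

lemma decay_exponent_bounds:
  fixes \<gamma> \<sigma> :: real
  assumes "-3 < \<gamma>" "\<gamma> < 0" "0 < \<sigma>" "\<sigma> \<le> 1/24"
  shows "3/8 < (\<sigma> * \<gamma> + 2) / (2 - \<gamma>)" "(\<sigma> * \<gamma> + 2) / (2 - \<gamma>) < 1"
proof -
  have "\<gamma> / 3 \<le> 8 * (\<sigma> * \<gamma>)"
    using assms by (simp add: mult_right_mono_neg)
  then have "3 * (2 - \<gamma>) < 8 * (\<sigma> * \<gamma> + 2)"
    using \<open>-3 < \<gamma>\<close> by (simp add: algebra_simps)
  then show "3/8 < (\<sigma> * \<gamma> + 2) / (2 - \<gamma>)"
    using assms by (simp add: field_simps)
  have "\<sigma> * \<gamma> < 0"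
    using assms by (simp add: mult_pos_neg)
  then show "(\<sigma> * \<gamma> + 2) / (2 - \<gamma>) < 1"
    using assms by (simp add: field_simps)
qed

lemma one_third_le_jbr_powr:
  assumes "norm v \<le> 1" "-3 \<le> \<gamma>"
  shows "1/3 \<le> jbr v powr \<gamma>"
proof -
  have jbr_ge_1: "1 \<le> jbr v"
    by (simp add: jbr_def)
  have jbr_sq: "(jbr v)\<^sup>2 \<le> 2"
    using assms(1) by (simp add: jbr_def power_le_one)
  then have "(jbr v)\<^sup>2 \<le> (3/2)\<^sup>2"
    by (simp add: power2_eq_square)
  then have "jbr v \<le> 3/2"
    by (rule power2_le_imp_le) simp
  then have "jbr v ^ 3 \<le> 2 * (3/2)"
    unfolding power3_eq_cube power2_eq_square[symmetric]
    using jbr_sq jbr_ge_1 by (intro mult_mono) auto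
  then have "1/3 \<le> 1 / jbr v ^ 3"
    using jbr_ge_1 by (simp add: field_simps)
  also have "\<dots> = jbr v powr (-3)"
    using jbr_ge_1 by (simp add: powr_minus powr_realpow divide_inverse)
  also have "\<dots> \<le> jbr v powr \<gamma>"
    using jbr_ge_1 assms(2) by (intro powr_mono) auto
  finally show ?thesis .
qed

lemma decay_rate_le_velocity_weights:
  fixes \<gamma> \<sigma> \<epsilon> t c N :: real and v :: vec3
  assumes "-3 < \<gamma>" "\<gamma> < 0" "0 < \<sigma>" "0 < \<epsilon>" "\<epsilon> \<le> 1" "0 \<le> t" "0 < c"
    and N: "c * jbr v powr \<gamma> \<le> N"
  shows "min (c/2) 1 * (\<epsilon> powr (-4/5) * (1 + t) powr ((\<sigma> * \<gamma> + 2) / (2 - \<gamma>) - 1))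
           \<le> N / (2 * \<epsilon>^2) + (jbr v)^2 / (1 + t) powr (1 + \<sigma>)"
proof -
  define A where "A = \<epsilon> powr (-2)"
  define B where "B = (1 + t) powr (-(1 + \<sigma>))"
  have "0 < A" "0 < B" "1 \<le> jbr v"
    using assms by (auto simp: A_def B_def jbr_def)
  have A_eq: "A = inverse (\<epsilon>^2)"
    using assms by (simp add: A_def powr_minus powr_numeral)
  have B_eq: "B = inverse ((1 + t) powr (1 + \<sigma>))"
    unfolding B_def by (rule powr_minus)
  have "\<epsilon> powr (-4/5) \<le> \<epsilon> powr (-4/(2 - \<gamma>))"
    using assms by (intro powr_mono') (auto simp: field_simps)
  also have "\<dots> = A powr (2/(2 - \<gamma>))"
    using assms by (simp add: A_def powr_powr)
  finally have eps_le: "\<epsilon> powr (-4/5) \<le> A powr (2/(2 - \<gamma>))" .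
  have "(\<sigma> * \<gamma> + 2) / (2 - \<gamma>) - 1 = -(1 + \<sigma>) * (-\<gamma>/(2 - \<gamma>))"
    using assms by (simp add: field_simps)
  then have t_eq: "(1 + t) powr ((\<sigma> * \<gamma> + 2) / (2 - \<gamma>) - 1) = B powr (-\<gamma>/(2 - \<gamma>))"
    by (simp only: B_def powr_powr)
  have "\<epsilon> powr (-4/5) * (1 + t) powr ((\<sigma> * \<gamma> + 2) / (2 - \<gamma>) - 1)
      \<le> A powr (2/(2 - \<gamma>)) * B powr (-\<gamma>/(2 - \<gamma>))"
    unfolding t_eq using eps_le \<open>0 < B\<close> by (simp add: mult_right_mono)
  also have "\<dots> \<le> A * jbr v powr \<gamma> + B * jbr v powr 2"
    using powr_balance_le[of A B "jbr v" \<gamma> 2] \<open>0 < A\<close> \<open>0 < B\<close> \<open>1 \<le> jbr v\<close> assms by simp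
  also have "\<dots> = jbr v powr \<gamma> / \<epsilon>^2 + (jbr v)^2 / (1 + t) powr (1 + \<sigma>)"
    using \<open>1 \<le> jbr v\<close> by (simp add: A_eq B_eq divide_inverse powr_numeral)
  finally have rate: "\<epsilon> powr (-4/5) * (1 + t) powr ((\<sigma> * \<gamma> + 2) / (2 - \<gamma>) - 1)
      \<le> jbr v powr \<gamma> / \<epsilon>^2 + (jbr v)^2 / (1 + t) powr (1 + \<sigma>)" .
  have "min (c/2) 1 * (jbr v powr \<gamma> / \<epsilon>^2) \<le> c/2 * (jbr v powr \<gamma> / \<epsilon>^2)"
    using \<open>0 < c\<close> by (intro mult_right_mono) auto
  also have "\<dots> = (c * jbr v powr \<gamma>) / (2 * \<epsilon>^2)"
    by simp
  also have "\<dots> \<le> N / (2 * \<epsilon>^2)"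
    using N by (intro divide_right_mono) auto
  finally have "min (c/2) 1 * (jbr v powr \<gamma> / \<epsilon>^2) \<le> N / (2 * \<epsilon>^2)" .
  moreover have "min (c/2) 1 * ((jbr v)^2 / (1 + t) powr (1 + \<sigma>)) \<le> (jbr v)^2 / (1 + t) powr (1 + \<sigma>)"
    using \<open>0 < c\<close> by (intro mult_left_le_one_le) auto
  moreover have "min (c/2) 1 * (\<epsilon> powr (-4/5) * (1 + t) powr ((\<sigma> * \<gamma> + 2) / (2 - \<gamma>) - 1))
      \<le> min (c/2) 1 * (jbr v powr \<gamma> / \<epsilon>^2) + min (c/2) 1 * ((jbr v)^2 / (1 + t) powr (1 + \<sigma>))"
    unfolding distrib_left[symmetric] using rate \<open>0 < c\<close> by (intro mult_left_mono) auto
  ultimately show ?thesis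
    by linarith
qed

lemma nu_tilde_div_eps2:
  assumes "\<epsilon> \<noteq> 0"
  shows "nu_tilde \<gamma> q0 \<theta> \<sigma> \<epsilon> g t v / \<epsilon>^2 =
    coll_freq \<gamma> q0 v / \<epsilon>^2 + (1/2 + 2 * vartheta_tilde \<theta> \<sigma> t) * (v \<bullet> g)
    + \<theta> * \<sigma> * (norm v)\<^sup>2 / (1 + t) powr (1 + \<sigma>)"
proof -
  have "nu_tilde \<gamma> q0 \<theta> \<sigma> \<epsilon> g t v / \<epsilon>^2 = coll_freq \<gamma> q0 v / \<epsilon>^2 + ((1/2) *\<^sub>R v) \<bullet> g
          + 2 * vartheta_tilde \<theta> \<sigma> t * (v \<bullet> g) + \<theta> * \<sigma> / (1 + t) powr (1 + \<sigma>) * (norm v)\<^sup>2"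
    using assms unfolding nu_tilde_def by simp
  then show ?thesis
    by (simp add: algebra_simps)
qed

lemma nu_tilde_lower_bound:
  fixes \<gamma> c1 \<sigma> \<theta> \<delta> \<epsilon> t :: real and g v :: vec3
  assumes "-3 \<le> \<gamma>" "0 < c1" and nu_ge: "c1 * jbr v powr \<gamma> \<le> coll_freq \<gamma> q0 v"
    and "0 < \<sigma>" "\<sigma> \<le> 1/4" "0 < \<theta>" "\<theta> \<le> 1"
    and \<delta>: "0 \<le> \<delta>" "\<delta> \<le> c1/27" "\<delta> \<le> \<theta> * \<sigma> / 9"
    and "0 < \<epsilon>" "\<epsilon> \<le> 1" "0 \<le> t"
    and g: "norm g \<le> \<delta> / (1 + t) powr (5/4)"
  shows "min (c1/(c1+12)) (\<theta> * \<sigma> / 4) * (coll_freq \<gamma> q0 v / (2 * \<epsilon>^2) + (jbr v)^2 / (1 + t) powr (1 + \<sigma>))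
           \<le> nu_tilde \<gamma> q0 \<theta> \<sigma> \<epsilon> g t v / \<epsilon>^2"
proof -
  define a where "a = coll_freq \<gamma> q0 v / \<epsilon>^2"
  define n where "n = norm v"
  define s where "s = 1 / (1 + t) powr (1 + \<sigma>)"
  define K where "K = 1/2 + 2 * vartheta_tilde \<theta> \<sigma> t"
  have s: "0 < s" "s \<le> 1"
    using assms by (auto simp: s_def ge_one_powr_ge_zero)
  have "0 \<le> c1 * jbr v powr \<gamma>"
    using \<open>0 < c1\<close> by simp
  then have "0 \<le> coll_freq \<gamma> q0 v"
    using nu_ge by linarith
  moreover have "0 < \<epsilon>^2" "\<epsilon>^2 \<le> 1"
    using assms by (auto simp: power_le_one)
  ultimately have "0 \<le> a" "coll_freq \<gamma> q0 v \<le> a"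
    by (auto simp: a_def le_divide_eq mult_left_le)
  have a_ge: "c1/3 \<le> a" if "n \<le> 1"
  proof -
    have "1/3 \<le> jbr v powr \<gamma>"
      using one_third_le_jbr_powr[of v \<gamma>] that assms by (simp add: n_def)
    then have "c1/3 \<le> c1 * jbr v powr \<gamma>"
      using mult_left_mono[of "1/3" "jbr v powr \<gamma>" c1] \<open>0 < c1\<close> by simp
    then show ?thesis
      using nu_ge \<open>coll_freq \<gamma> q0 v \<le> a\<close> by linarith
  qed
  have K: "0 \<le> K" "K \<le> 9/2"
  proof -
    have "(1 + t) powr (-\<sigma>) \<le> 1"
      using assms powr_mono[of "-\<sigma>" 0 "1 + t"] by simp
    then have "\<theta> * (1 + (1 + t) powr (-\<sigma>)) \<le> 1 * 2"
      using assms by (intro mult_mono) auto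
    then show "0 \<le> K" "K \<le> 9/2"
      using assms by (auto simp: K_def vartheta_tilde_def)
  qed
  have "norm g \<le> \<delta> * s"
  proof -
    have "(1 + t) powr (1 + \<sigma>) \<le> (1 + t) powr (5/4)"
      using assms by (intro powr_mono) auto
    then have "\<delta> / (1 + t) powr (5/4) \<le> \<delta> / (1 + t) powr (1 + \<sigma>)"
      using assms by (intro divide_left_mono) auto
    then show ?thesis
      using g by (simp add: s_def)
  qed
  then have "\<bar>v \<bullet> g\<bar> \<le> \<delta> * n * s"
    using Cauchy_Schwarz_ineq2[of v g] mult_left_mono[of "norm g" "\<delta> * s" n]
    by (simp add: n_def mult.assoc mult.left_commute)
  then have "\<bar>K * (v \<bullet> g)\<bar> \<le> 9/2 * (\<delta> * n * s)"
    unfolding abs_mult using K \<delta> s by (intro mult_mono) (auto simp: n_def)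
  then have lin: "\<bar>K * (v \<bullet> g)\<bar> \<le> (9/2 * \<delta>) * n * s"
    by (simp add: mult.assoc)
  \<comment> \<open>With a0 = c1/3 and kappa = 9/2 delta, the smallness conditions of absorb_linear_term
      are exactly delta <= c1/27 and delta <= theta sigma/9.\<close>
  have "min ((c1/3)/(c1/3+4)) (\<theta> * \<sigma> / 4) * (a/2 + (1 + n\<^sup>2) * s)
      \<le> a + K * (v \<bullet> g) + \<theta> * \<sigma> * n\<^sup>2 * s"
    by (rule absorb_linear_term[OF \<open>0 \<le> a\<close> _ s _ _ _ lin _ _ a_ge])
      (use assms \<delta> in \<open>auto simp: n_def\<close>)
  moreover have "(c1/3)/(c1/3+4) = c1/(c1+12)"
    by (simp add: field_simps)
  moreover have "nu_tilde \<gamma> q0 \<theta> \<sigma> \<epsilon> g t v / \<epsilon>^2 = a + K * (v \<bullet> g) + \<theta> * \<sigma> * n\<^sup>2 * s"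
    using assms by (simp add: nu_tilde_div_eps2 a_def K_def n_def s_def)
  moreover have "coll_freq \<gamma> q0 v / (2 * \<epsilon>^2) + (jbr v)^2 / (1 + t) powr (1 + \<sigma>) = a/2 + (1 + n\<^sup>2) * s"
    by (simp add: a_def s_def n_def jbr_def)
  ultimately show ?thesis
    by simp
qed

lemma nu_tilde_bounds:
  fixes \<gamma> c1 \<sigma> \<theta> \<delta> \<epsilon> t :: real and g v :: vec3
  assumes "-3 < \<gamma>" "0 < c1" and nu_ge: "c1 * jbr v powr \<gamma> \<le> coll_freq \<gamma> q0 v"
    and "0 < \<sigma>" "\<sigma> \<le> 1/4" "0 < \<theta>" "\<theta> \<le> 1"
    and "0 \<le> \<delta>" "\<delta> \<le> min (c1/27) (\<theta> * \<sigma> / 9)"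
    and "0 < \<epsilon>" "\<epsilon> \<le> 1" "0 \<le> t"
    and g: "norm g \<le> \<delta> / (1 + t) powr (5/4)"
  defines "C \<equiv> min (c1/(c1+12)) (\<theta> * \<sigma> / 4) * min (c1/2) 1"
  shows "nu_tilde \<gamma> q0 \<theta> \<sigma> \<epsilon> g t v / \<epsilon>^2
           \<ge> C * (coll_freq \<gamma> q0 v / (2 * \<epsilon>^2) + (jbr v)^2 / (1 + t) powr (1 + \<sigma>))
         \<and> (\<gamma> < 0 \<and> \<sigma> \<le> 1/24 \<longrightarrow>
              (let \<rho> = (\<sigma> * \<gamma> + 2) / (2 - \<gamma>) in
                 3/8 < \<rho> \<and> \<rho> < 1 \<and>
                 nu_tilde \<gamma> q0 \<theta> \<sigma> \<epsilon> g t v / \<epsilon>^2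
                   \<ge> C * (\<epsilon> powr (-4/5) * (1 + t) powr (\<rho> - 1))))"
proof -
  define C1 where "C1 = min (c1/(c1+12)) (\<theta> * \<sigma> / 4)"
  define m where "m = min (c1/2) (1::real)"
  define X where "X = coll_freq \<gamma> q0 v / (2 * \<epsilon>^2) + (jbr v)^2 / (1 + t) powr (1 + \<sigma>)"
  have "0 < C1" "0 < m" "m \<le> 1"
    using assms by (auto simp: C1_def m_def)
  have lower: "C1 * X \<le> nu_tilde \<gamma> q0 \<theta> \<sigma> \<epsilon> g t v / \<epsilon>^2"
    unfolding C1_def X_def using assms by (intro nu_tilde_lower_bound) auto
  have below_lower: "C * Y \<le> nu_tilde \<gamma> q0 \<theta> \<sigma> \<epsilon> g t v / \<epsilon>^2" if "m * Y \<le> X" for Y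
  proof -
    have "C * Y = C1 * (m * Y)"
      by (simp add: C_def C1_def m_def)
    also have "\<dots> \<le> C1 * X"
      using that \<open>0 < C1\<close> by (intro mult_left_mono) auto
    finally show ?thesis
      using lower by linarith
  qed
  have "0 \<le> c1 * jbr v powr \<gamma>"
    using \<open>0 < c1\<close> by simp
  then have "0 \<le> X"
    using nu_ge unfolding X_def by simp
  then have "m * X \<le> X"
    using \<open>0 < m\<close> \<open>m \<le> 1\<close> by (intro mult_left_le_one_le) auto
  show ?thesis
    unfolding X_def[symmetric]
  proof (intro conjI impI)
    show "C * X \<le> nu_tilde \<gamma> q0 \<theta> \<sigma> \<epsilon> g t v / \<epsilon>^2"
      using below_lower[OF \<open>m * X \<le> X\<close>] .
  next
    assume small: "\<gamma> < 0 \<and> \<sigma> \<le> 1/24"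
    then have "m * (\<epsilon> powr (-4/5) * (1 + t) powr ((\<sigma> * \<gamma> + 2) / (2 - \<gamma>) - 1)) \<le> X"
      unfolding m_def X_def using assms by (intro decay_rate_le_velocity_weights) auto
    then show "let \<rho> = (\<sigma> * \<gamma> + 2) / (2 - \<gamma>) in 3/8 < \<rho> \<and> \<rho> < 1 \<and>
        C * (\<epsilon> powr (-4/5) * (1 + t) powr (\<rho> - 1)) \<le> nu_tilde \<gamma> q0 \<theta> \<sigma> \<epsilon> g t v / \<epsilon>^2"
      using below_lower decay_exponent_bounds[of \<gamma> \<sigma>] small assms unfolding Let_def by blast
  qed
qed

theorem lemma3p1:
  fixes \<gamma> :: real and q0 :: "real \<Rightarrow> real" and Cq c1 c2 :: real and \<sigma> :: real
  assumes gamma: "-3 < \<gamma>" "\<gamma> \<le> 1"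
    and q0_meas: "q0 \<in> borel_measurable borel"
    and q0_bd: "\<And>a. 0 \<le> q0 a \<and> q0 a \<le> Cq * \<bar>cos a\<bar>"
    and nu_equiv: "0 < c1" "\<And>v. c1 * jbr v powr \<gamma> \<le> coll_freq \<gamma> q0 v"
                  "\<And>v. coll_freq \<gamma> q0 v \<le> c2 * jbr v powr \<gamma>"
    and sigma: "0 < \<sigma>" "\<sigma> \<le> 1/4"
  shows "\<exists>\<theta>0>0. \<forall>\<theta>. 0 < \<theta> \<and> \<theta> \<le> \<theta>0 \<longrightarrow>
           (\<exists>\<delta>0>0. \<exists>C>0. \<forall>\<delta> \<epsilon> T (\<phi> :: real \<Rightarrow> vec3 \<Rightarrow> real) (gphi :: real \<Rightarrow> vec3 \<Rightarrow> vec3).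
              0 < \<delta> \<and> \<delta> \<le> \<delta>0 \<and> 0 < \<epsilon> \<and> \<epsilon> \<le> 1 \<and> 0 \<le> T \<and>
              (\<forall>t\<in>{0..T}. \<forall>x. GDERIV (\<phi> t) x :> gphi t x) \<and>
              (\<forall>t\<in>{0..T}. W1inf_le (gphi t) (\<delta> / (1 + t) powr (5/4)))
              \<longrightarrow> (\<forall>t\<in>{0..T}. \<forall>x v.
                    nu_tilde \<gamma> q0 \<theta> \<sigma> \<epsilon> (gphi t x) t v / \<epsilon>^2
                      \<ge> C * (coll_freq \<gamma> q0 v / (2 * \<epsilon>^2) + (jbr v)^2 / (1 + t) powr (1 + \<sigma>))
                    \<and> (\<gamma> < 0 \<and> \<sigma> \<le> 1/24 \<longrightarrow>
                         (let \<rho> = (\<sigma> * \<gamma> + 2) / (2 - \<gamma>) in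
                            3/8 < \<rho> \<and> \<rho> < 1 \<and>
                            nu_tilde \<gamma> q0 \<theta> \<sigma> \<epsilon> (gphi t x) t v / \<epsilon>^2
                              \<ge> C * (\<epsilon> powr (-4/5) * (1 + t) powr (\<rho> - 1))))))"
proof (rule exI[of _ 1], intro conjI allI impI, goal_cases)
  case 1
  show ?case by simp
next
  case (2 \<theta>)
  show ?case
  proof (rule exI[of _ "min (c1/27) (\<theta> * \<sigma> / 9)"], rule conjI[rotated],
      rule exI[of _ "min (c1/(c1+12)) (\<theta> * \<sigma> / 4) * min (c1/2) 1"], rule conjI[rotated],
      intro allI impI ballI, goal_cases)
    case (1 \<delta> \<epsilon> T \<phi> gphi t x v)
    then have "norm (gphi t x) \<le> \<delta> / (1 + t) powr (5/4)"
      by (blast intro: W1inf_le_imp_norm_le)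
    with 1 2 show ?case
      using gamma nu_equiv sigma by (intro nu_tilde_bounds) auto
  qed (use 2 nu_equiv sigma in auto)
qed

end
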